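(* Let $N=2^n$ and let $f(x)=\sum_{k=0}^{d}\alpha_k e^{2\pi i k x/N}$ with $\alpha_k\in\mathbb{C}$ and $|f|^2\le1$. Then the $N\times N$ diagonal matrix $\mathcal{A}$ with $\mathcal{A}|x\rangle=f(x)|x\rangle$ for $x\in\{0,\dots,N-1\}$ can be implemented (as the top-left block, with respect to one ancilla qubit, of a unitary circuit) using $\mathcal{O}(d\log N)$ 1- and 2-qubit gates.
   Context: $|x\rangle$ denotes the computational basis state on $n=\log N$ qubits given by the binary representation of the integer $x$. Gates are arbitrary 1- and 2-qubit unitaries. *)

theory Defs
  imports Complex_Main "Jordan_Normal_Form.Matrix"
begin

definition qbit :: "nat \<Rightarrow> nat \<Rightarrow> nat" where
  "qbit k x = (x div 2 ^ k) mod 2"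

definition adjoint_mat :: "complex mat \<Rightarrow> complex mat" where
  "adjoint_mat U = mat (dim_col U) (dim_row U) (\<lambda>(i, j). cnj (U $$ (j, i)))"

definition unitary_mat :: "nat \<Rightarrow> complex mat \<Rightarrow> bool" where
  "unitary_mat k U \<longleftrightarrow> U \<in> carrier_mat k k \<and>
     U * adjoint_mat U = 1\<^sub>m k \<and> adjoint_mat U * U = 1\<^sub>m k"

(* A gate: an arbitrary 1-qubit unitary acting on qubit q, or an arbitrary
   2-qubit unitary acting on the ordered pair of distinct qubits (q1, q2). *)
datatype gate = G1 nat "complex mat" | G2 nat nat "complex mat"

fun valid_gate :: "nat \<Rightarrow> gate \<Rightarrow> bool" where
  "valid_gate m (G1 q U) \<longleftrightarrow> q < m \<and> unitary_mat 2 U"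
| "valid_gate m (G2 q1 q2 U) \<longleftrightarrow> q1 < m \<and> q2 < m \<and> q1 \<noteq> q2 \<and> unitary_mat 4 U"

(* The 2^m x 2^m matrix of a gate acting on an m-qubit register
   (tensor product of the gate with the identity on the other qubits). *)
fun gate_mat :: "nat \<Rightarrow> gate \<Rightarrow> complex mat" where
  "gate_mat m (G1 q U) = mat (2 ^ m) (2 ^ m) (\<lambda>(i, j).
     if (\<forall>k<m. k \<noteq> q \<longrightarrow> qbit k i = qbit k j)
     then U $$ (qbit q i, qbit q j) else 0)"
| "gate_mat m (G2 q1 q2 U) = mat (2 ^ m) (2 ^ m) (\<lambda>(i, j).
     if (\<forall>k<m. k \<noteq> q1 \<and> k \<noteq> q2 \<longrightarrow> qbit k i = qbit k j)
     then U $$ (2 * qbit q1 i + qbit q2 i, 2 * qbit q1 j + qbit q2 j) else 0)"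

(* The unitary implemented by a circuit: gates applied in list order. *)
definition circuit_mat :: "nat \<Rightarrow> gate list \<Rightarrow> complex mat" where
  "circuit_mat m gs = foldl (\<lambda>M g. gate_mat m g * M) (1\<^sub>m (2 ^ m)) gs"

definition trig_poly :: "nat \<Rightarrow> nat \<Rightarrow> (nat \<Rightarrow> complex) \<Rightarrow> real \<Rightarrow> complex" where
  "trig_poly n d \<alpha> x = (\<Sum>k\<le>d. \<alpha> k * exp (2 * of_real pi * \<i> * of_nat k * of_real x / 2 ^ n))"

end

theory Submission
  imports Defs "HOL-Computational_Algebra.Fundamental_Theorem_Algebra"
    "HOL-Library.Nonpos_Ints"
begin

(* Write f(x) = P(w^x) with w = exp(2 pi i / 2^n) and P = sum_k alpha_k z^k, a polynomial of
   degree d with |P| <= 1 on the unit circle. By the Fejer-Riesz theorem 1 - |P|^2 = |Q|^2 on the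
   circle for a polynomial Q of degree d, so (P(z), Q(z)) is a unit vector whenever |z| = 1.
   Such a pair is peeled off one degree at a time: the unit vector (a, c) that is orthogonal to the
   constant coefficients and parallel to the leading ones rotates (P, Q) into (z T, B), where
   (T, B) is again a complementary pair, of degree d - 1. With the ancilla as the top qubit, every
   2 x 2 ancilla block of the circuit (one block per system state x) is then a product of d + 1
   ancilla rotations and d phase layers, each layer multiplying the ancilla-0 branch by w^x with
   n controlled phase gates: (d + 1) + d n gates in all. *)

section \<open>Conjugate reflection of polynomials\<close>

definition cnj_reflect :: "nat \<Rightarrow> complex poly \<Rightarrow> complex poly" where
  "cnj_reflect m p = (\<Sum>k\<le>m. monom (cnj (coeff p k)) (m - k))"

lemma coeff_cnj_reflect:
  "coeff (cnj_reflect m p) j = (if j \<le> m then cnj (coeff p (m - j)) else 0)"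
proof -
  have "coeff (cnj_reflect m p) j = (\<Sum>k\<le>m. if k = m - j \<and> j \<le> m then cnj (coeff p k) else 0)"
    unfolding cnj_reflect_def coeff_sum coeff_monom by (rule sum.cong) auto
  then show ?thesis
    by (simp add: sum.delta)
qed

lemma degree_cnj_reflect: "degree (cnj_reflect m p) \<le> m"
  by (rule degree_le) (simp add: coeff_cnj_reflect)

lemma cnj_reflect_linear: "cnj_reflect 1 [:-a, 1:] = [:1, - cnj a:]"
  by (rule poly_eqI) (simp add: coeff_cnj_reflect coeff_pCons split: nat.split)

lemma poly_altdef_degree_le:
  "degree p \<le> m \<Longrightarrow> poly p x = (\<Sum>k\<le>m. coeff p k * x ^ k)"
  for p :: "'a::comm_semiring_1 poly"
proof -
  assume "degree p \<le> m"
  then have "poly p x = poly (\<Sum>k\<le>m. monom (coeff p k) k) x"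
    by (simp only: poly_as_sum_of_monoms')
  also have "\<dots> = (\<Sum>k\<le>m. coeff p k * x ^ k)"
    by (simp only: poly_sum poly_monom)
  finally show ?thesis .
qed

lemma poly_cnj_reflect:
  assumes "degree p \<le> m" "z \<noteq> 0"
  shows "poly (cnj_reflect m p) z = z ^ m * cnj (poly p (1 / cnj z))"
proof -
  have "poly (cnj_reflect m p) z = (\<Sum>k\<le>m. z ^ m * (cnj (coeff p k) * (1 / z) ^ k))"
    unfolding cnj_reflect_def poly_sum poly_monom
    by (rule sum.cong) (use assms(2) in \<open>auto simp: power_diff field_simps\<close>)
  also have "\<dots> = z ^ m * cnj (poly p (1 / cnj z))"
    unfolding poly_altdef_degree_le[OF assms(1)] sum_distrib_left[symmetric] cnj_sum
    by simp
  finally show ?thesis .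
qed

lemma poly_cnj_reflect_circle:
  assumes "degree p \<le> m" "cmod z = 1"
  shows "poly (cnj_reflect m p) z = z ^ m * cnj (poly p z)"
proof -
  have "z \<noteq> 0"
    using assms(2) by auto
  have zz: "z * cnj z = 1"
    using assms(2) complex_norm_square[of z] by simp
  then have "cnj z \<noteq> 0"
    by auto
  with zz have "1 / cnj z = z"
    by (simp add: field_simps)
  then show ?thesis
    using poly_cnj_reflect[OF assms(1) \<open>z \<noteq> 0\<close>] by simp
qed

lemma poly_mult_cnj_reflect_circle:
  "degree p \<le> m \<Longrightarrow> cmod z = 1 \<Longrightarrow>
    poly (p * cnj_reflect m p) z = z ^ m * of_real ((cmod (poly p z))\<^sup>2)"
  by (simp only: poly_mult poly_cnj_reflect_circle complex_norm_square) (simp add: algebra_simps)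

lemma infinite_unit_circle: "infinite {z::complex. cmod z = 1}"
proof
  assume fin: "finite {z::complex. cmod z = 1}"
  have "inj_on cis {-pi<..pi}"
    by (rule inj_on_inverseI[where g = Arg]) (auto intro: cis_Arg_unique)
  moreover have "cis ` {-pi<..pi} \<subseteq> {z. cmod z = 1}"
    by auto
  ultimately have "finite {-pi<..pi}"
    using fin finite_imageD finite_subset by metis
  moreover have "-pi < pi"
    using pi_gt_zero by linarith
  ultimately show False
    using infinite_Ioc by blast
qed

lemma poly_eq_on_circleI:
  fixes p q :: "complex poly"
  assumes "\<And>z. cmod z = 1 \<Longrightarrow> poly p z = poly q z"
  shows "p = q"
proof (rule ccontr)
  assume "p \<noteq> q"
  then have "finite {z. poly (p - q) z = 0}"
    by (intro poly_roots_finite) simp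
  moreover have "{z::complex. cmod z = 1} \<subseteq> {z. poly (p - q) z = 0}"
    using assms by auto
  ultimately show False
    using infinite_unit_circle finite_subset by blast
qed

lemma cnj_reflect_mult:
  assumes "degree p \<le> m" "degree q \<le> k"
  shows "cnj_reflect (m + k) (p * q) = cnj_reflect m p * cnj_reflect k q"
proof (rule poly_eq_on_circleI)
  fix z :: complex
  assume z: "cmod z = 1"
  have "degree (p * q) \<le> m + k"
    using degree_mult_le[of p q] assms by linarith
  then show "poly (cnj_reflect (m + k) (p * q)) z = poly (cnj_reflect m p * cnj_reflect k q) z"
    using z assms by (simp add: poly_cnj_reflect_circle power_add)
qed

section \<open>Fejer-Riesz factorization\<close>

lemma nonneg_Reals_by_continuity:
  fixes K :: "'a::t2_space \<Rightarrow> complex"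
  assumes "isCont K x" "at x within S \<noteq> bot" "eventually (\<lambda>t. K t \<in> \<real>\<^sub>\<ge>\<^sub>0) (at x within S)"
  shows "K x \<in> \<real>\<^sub>\<ge>\<^sub>0"
proof -
  have lim: "(K \<longlongrightarrow> K x) (at x within S)"
    using tendsto_mono[OF at_le[OF subset_UNIV] isContD[OF assms(1)]] .
  have "eventually (\<lambda>t. 0 \<le> Re (K t)) (at x within S)"
    "eventually (\<lambda>t. 0 \<le> Im (K t)) (at x within S)"
    "eventually (\<lambda>t. Im (K t) \<le> 0) (at x within S)"
    using assms(3) by (auto elim: eventually_mono simp: complex_nonneg_Reals_iff)
  then have "0 \<le> Re (K x)" "0 \<le> Im (K x)" "Im (K x) \<le> 0"
    using tendsto_lowerbound[OF tendsto_Re[OF lim] _ assms(2)]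
      tendsto_lowerbound[OF tendsto_Im[OF lim] _ assms(2)]
      tendsto_upperbound[OF tendsto_Im[OF lim] _ assms(2)] by blast+
  then show ?thesis
    by (simp add: complex_nonneg_Reals_iff)
qed

lemma cis_ne_1: "0 < t \<Longrightarrow> t < pi \<Longrightarrow> cis t \<noteq> 1"
  using sin_gt_zero[of t] by (auto simp: complex_eq_iff)

lemma nonneg_Reals_at_circle_point:
  fixes G :: "complex \<Rightarrow> complex"
  assumes "isCont G a" "cmod a = 1" "\<And>z. cmod z = 1 \<Longrightarrow> z \<noteq> a \<Longrightarrow> G z \<in> \<real>\<^sub>\<ge>\<^sub>0"
  shows "G a \<in> \<real>\<^sub>\<ge>\<^sub>0"
proof -
  have "isCont (\<lambda>t::real. a * cis t) 0"
    unfolding cis_conv_exp by (intro continuous_intros)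
  then have "isCont (\<lambda>t. G (a * cis t)) 0"
    using isCont_o2 assms(1) by fastforce
  moreover have "eventually (\<lambda>t. G (a * cis t) \<in> \<real>\<^sub>\<ge>\<^sub>0) (at_right 0)"
    using eventually_at_right_real[OF pi_gt_zero]
  proof (rule eventually_mono)
    fix t
    assume "t \<in> {0<..<pi}"
    then have "a * cis t \<noteq> a"
      using cis_ne_1[of t] assms(2) by auto
    then show "G (a * cis t) \<in> \<real>\<^sub>\<ge>\<^sub>0"
      using assms(2,3) by (simp add: norm_mult)
  qed
  ultimately show ?thesis
    using nonneg_Reals_by_continuity[where x = 0 and S = "{0<..}"] by fastforce
qed

lemma nonneg_Reals_sign_change_zero:
  fixes K :: "real \<Rightarrow> complex"
  assumes "isCont K 0" "0 < e"
    and "\<And>t. 0 < t \<Longrightarrow> t < e \<Longrightarrow> K t \<in> \<real>\<^sub>\<ge>\<^sub>0"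
    and "\<And>t. - e < t \<Longrightarrow> t < 0 \<Longrightarrow> - K t \<in> \<real>\<^sub>\<ge>\<^sub>0"
  shows "K 0 = 0"
proof -
  have "K 0 \<in> \<real>\<^sub>\<ge>\<^sub>0"
    by (rule nonneg_Reals_by_continuity[where S = "{0<..}", OF assms(1)])
      (use eventually_at_right_real[OF assms(2)] assms(3) in \<open>auto elim: eventually_mono\<close>)
  moreover have "- K 0 \<in> \<real>\<^sub>\<ge>\<^sub>0"
    by (rule nonneg_Reals_by_continuity[where S = "{..<0}" and K = "\<lambda>t. - K t"])
      (use assms(1) eventually_at_left_real[of "- e" 0] assms(2,4)
        in \<open>auto intro: continuous_intros elim: eventually_mono\<close>)
  ultimately show ?thesis
    by (auto simp: complex_nonneg_Reals_iff complex_eq_iff)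
qed

lemma cis_minus_1: "cis t - 1 = 2 * \<i> * sin (t / 2) * cis (t / 2)"
proof -
  have "cos t = 1 - 2 * (sin (t / 2))\<^sup>2" "sin t = 2 * sin (t / 2) * cos (t / 2)"
    using cos_double_sin[of "t / 2"] sin_double[of "t / 2"] by simp_all
  then show ?thesis
    by (simp add: complex_eq_iff power2_eq_square)
qed

lemma nonneg_Reals_of_real_mult_iff:
  "0 < s \<Longrightarrow> complex_of_real s * z \<in> \<real>\<^sub>\<ge>\<^sub>0 \<longleftrightarrow> z \<in> \<real>\<^sub>\<ge>\<^sub>0"
  by (simp add: complex_nonneg_Reals_iff zero_le_mult_iff)

definition nonneg_on_circle :: "nat \<Rightarrow> complex poly \<Rightarrow> bool" where
  "nonneg_on_circle d R \<longleftrightarrow> (\<forall>z. cmod z = 1 \<longrightarrow> poly R z / z ^ d \<in> \<real>\<^sub>\<ge>\<^sub>0)"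

lemma nonneg_on_circle_root_multiple:
  assumes R: "nonneg_on_circle d ([:-a, 1:] * R)" and a: "cmod a = 1"
  shows "poly R a = 0"
proof -
  (* With w = a * cis t, the nonnegative value ([:-a, 1:] * R)(w) / w ^ d equals 2 sin (t / 2) * K t,
     so the continuous K changes sign at t = 0. *)
  define K where "K t = \<i> * a * cis (t / 2) * poly R (a * cis t) / (a * cis t) ^ d" for t
  have "a \<noteq> 0"
    using a by auto
  have scaled: "complex_of_real (2 * sin (t / 2)) * K t \<in> \<real>\<^sub>\<ge>\<^sub>0" for t
  proof -
    have "cmod (a * cis t) = 1"
      using a by (simp add: norm_mult)
    then have "poly ([:-a, 1:] * R) (a * cis t) / (a * cis t) ^ d \<in> \<real>\<^sub>\<ge>\<^sub>0"
      using R unfolding nonneg_on_circle_def by blast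
    moreover have "poly [:-a, 1:] (a * cis t) = a * (cis t - 1)"
      by (simp add: algebra_simps)
    then have "poly ([:-a, 1:] * R) (a * cis t) / (a * cis t) ^ d
        = complex_of_real (2 * sin (t / 2)) * K t"
      unfolding K_def poly_mult cis_minus_1 by (simp add: field_simps)
    ultimately show ?thesis
      by simp
  qed
  have "isCont K 0"
    unfolding K_def cis_conv_exp using \<open>a \<noteq> 0\<close> by (intro continuous_intros) auto
  moreover have "K t \<in> \<real>\<^sub>\<ge>\<^sub>0" if "0 < t" "t < pi" for t
  proof -
    have "0 < 2 * sin (t / 2)"
      using that by (intro mult_pos_pos sin_gt_zero) auto
    then show ?thesis
      using scaled nonneg_Reals_of_real_mult_iff by blast
  qed
  moreover have "- K t \<in> \<real>\<^sub>\<ge>\<^sub>0" if "- pi < t" "t < 0" for t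
  proof -
    have "0 < 2 * sin (- t / 2)"
      using that by (intro mult_pos_pos sin_gt_zero) auto
    then show ?thesis
      using scaled[of t] nonneg_Reals_of_real_mult_iff by fastforce
  qed
  ultimately have "K 0 = 0"
    using nonneg_Reals_sign_change_zero pi_gt_zero by blast
  then show ?thesis
    using \<open>a \<noteq> 0\<close> by (simp add: K_def)
qed

lemma nonneg_on_circle_cnj_reflect:
  assumes deg: "degree R \<le> 2 * d" and R: "nonneg_on_circle d R"
  shows "cnj_reflect (2 * d) R = R"
proof (rule poly_eq_on_circleI)
  fix z :: complex
  assume z: "cmod z = 1"
  then obtain r where r: "poly R z / z ^ d = of_real r"
    using R unfolding nonneg_on_circle_def by (meson nonneg_Reals_cases)
  have "z \<noteq> 0" "z * cnj z = 1"
    using z complex_norm_square[of z] by auto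
  then have "poly R z = z ^ d * of_real r"
    using r by (simp add: field_simps)
  moreover have "z ^ (2 * d) * cnj (z ^ d * of_real r) = z ^ d * (z * cnj z) ^ d * of_real r"
    by (simp add: power_mult_distrib mult_2 power_add)
  ultimately show "poly (cnj_reflect (2 * d) R) z = poly R z"
    using poly_cnj_reflect_circle[OF deg z] \<open>z * cnj z = 1\<close> by simp
qed

lemma nonneg_on_circle_top_coeff:
  "degree R \<le> 2 * d \<Longrightarrow> nonneg_on_circle d R \<Longrightarrow> coeff R (2 * d) = cnj (coeff R 0)"
  by (subst nonneg_on_circle_cnj_reflect[symmetric]) (simp_all add: coeff_cnj_reflect)

lemma cmod_eq_1_if_eq_inverse_cnj:
  assumes "a \<noteq> 0" "a = 1 / cnj a"
  shows "cmod a = 1"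
proof -
  have "of_real ((cmod a)\<^sup>2) = (1::complex)"
    using assms by (simp only: complex_norm_square) (simp add: field_simps)
  then show ?thesis
    by (metis norm_ge_zero of_real_eq_1_iff power2_eq_1_iff le_minus_one_simps(3))
qed

lemma cnj_reflect_linear_root:
  "a \<noteq> 0 \<Longrightarrow> cnj_reflect 1 [:-a, 1:] = smult (- cnj a) [:-(1 / cnj a), 1:]"
  using cnj_reflect_linear[of a] by simp

lemma nonneg_on_circle_root_pair:
  assumes deg: "degree R \<le> 2 * d" and R: "nonneg_on_circle d R"
    and root: "poly R a = 0" and "a \<noteq> 0"
  obtains R' where "R = [:-a, 1:] * cnj_reflect 1 [:-a, 1:] * R'"
proof -
  let ?b = "1 / cnj a"
  obtain R1 where R1: "R = [:-a, 1:] * R1"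
    using root by (auto simp: poly_eq_0_iff_dvd dvd_def)
  have "poly R1 ?b = 0"
  proof (cases "a = ?b")
    case True
    then show ?thesis
      using nonneg_on_circle_root_multiple R R1 cmod_eq_1_if_eq_inverse_cnj[OF \<open>a \<noteq> 0\<close>] by metis
  next
    case False
    have "?b \<noteq> 0" "1 / cnj ?b = a"
      using \<open>a \<noteq> 0\<close> by simp_all
    then have "poly R ?b = 0"
      using poly_cnj_reflect[OF deg, of ?b] nonneg_on_circle_cnj_reflect[OF deg R] root by simp
    moreover have "poly R ?b = (?b - a) * poly R1 ?b"
      unfolding R1 poly_mult by (simp add: algebra_simps)
    ultimately show ?thesis
      using False by simp
  qed
  then obtain R2 where R2: "R1 = [:-?b, 1:] * R2"
    by (auto simp: poly_eq_0_iff_dvd dvd_def)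
  have "[:-a, 1:] * cnj_reflect 1 [:-a, 1:] * smult (- 1 / cnj a) R2
      = smult (- 1 / cnj a * - cnj a) ([:-a, 1:] * [:-?b, 1:] * R2)"
    unfolding cnj_reflect_linear_root[OF \<open>a \<noteq> 0\<close>]
    by (simp only: mult_smult_left mult_smult_right smult_smult)
  also have "\<dots> = [:-a, 1:] * [:-?b, 1:] * R2"
    using \<open>a \<noteq> 0\<close> by simp
  also have "\<dots> = R"
    unfolding R1 R2 by (simp only: mult.assoc)
  finally show thesis
    using that by metis
qed

lemma nonneg_on_circle_cancel_factor:
  assumes "nonneg_on_circle (Suc d) ([:-a, 1:] * cnj_reflect 1 [:-a, 1:] * R)"
  shows "nonneg_on_circle d R"
proof -
  have off: "poly R z / z ^ d \<in> \<real>\<^sub>\<ge>\<^sub>0" if z: "cmod z = 1" "z \<noteq> a" for z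
  proof -
    have "z \<noteq> 0" "0 < (cmod (z - a))\<^sup>2"
      using z by auto
    moreover have "poly ([:-a, 1:] * cnj_reflect 1 [:-a, 1:] * R) z / z ^ Suc d
        = of_real ((cmod (z - a))\<^sup>2) * (poly R z / z ^ d)"
      using poly_mult_cnj_reflect_circle[of "[:-a, 1:]" 1 z] z \<open>z \<noteq> 0\<close> by simp
    ultimately show ?thesis
      using assms z nonneg_Reals_of_real_mult_iff unfolding nonneg_on_circle_def by metis
  qed
  show ?thesis
    unfolding nonneg_on_circle_def
  proof (intro allI impI)
    fix z :: complex
    assume z: "cmod z = 1"
    show "poly R z / z ^ d \<in> \<real>\<^sub>\<ge>\<^sub>0"
    proof (cases "z = a")
      case True
      then have "isCont (\<lambda>w. poly R w / w ^ d) a"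
        using z by (intro continuous_intros) auto
      then show ?thesis
        using nonneg_Reals_at_circle_point off z True by blast
    qed (use off z in blast)
  qed
qed

lemma nonneg_on_circle_obtain_factor:
  assumes deg: "degree R \<le> 2 * Suc d" and R: "nonneg_on_circle (Suc d) R"
  obtains a R' where "R = [:-a, 1:] * cnj_reflect 1 [:-a, 1:] * R'" "degree R' \<le> 2 * d"
proof -
  have top: "coeff R (2 * Suc d) = cnj (coeff R 0)"
    using nonneg_on_circle_top_coeff[OF deg R] .
  show thesis
  proof (cases "coeff R 0 = 0")
    case True
    (* a = 0: the factor is just z, and the top coefficient vanishes along with the constant one *)
    obtain R' where R': "R = pCons 0 R'"
      using True by (metis pCons_cases coeff_pCons_0)
    have "R = [:-0, 1:] * cnj_reflect 1 [:-0, 1:] * R'"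
      using R' cnj_reflect_linear[of 0] by simp
    moreover have "degree R' \<le> 2 * d"
    proof (rule degree_le, intro allI impI)
      fix i
      assume "2 * d < i"
      then have "Suc i = 2 * Suc d \<or> degree R < Suc i"
        using deg by auto
      then show "coeff R' i = 0"
        using R' top True coeff_eq_0[of R "Suc i"] by auto
    qed
    ultimately show thesis
      by (rule that)
  next
    case False
    then have "R \<noteq> 0" "degree R = 2 * Suc d"
      using deg top le_degree[of R "2 * Suc d"] by auto
    then have "\<not> constant (poly R)"
      by (simp add: constant_degree)
    then obtain a where a: "poly R a = 0"
      using fundamental_theorem_of_algebra by blast
    have "a \<noteq> 0"
      using a False by (auto simp: poly_0_coeff_0)
    obtain R' where R': "R = [:-a, 1:] * cnj_reflect 1 [:-a, 1:] * R'"
      using nonneg_on_circle_root_pair[OF deg R a \<open>a \<noteq> 0\<close>] by blast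
    have "degree (cnj_reflect 1 [:-a, 1:]) = 1"
      using cnj_reflect_linear[of a] \<open>a \<noteq> 0\<close> by simp
    then have "degree ([:-a, 1:] * cnj_reflect 1 [:-a, 1:]) = 2"
      by (subst degree_mult_eq) auto
    then have "degree R' = 2 * d"
      using \<open>degree R = 2 * Suc d\<close> \<open>R \<noteq> 0\<close> unfolding R' by (subst (asm) degree_mult_eq) auto
    with R' show thesis
      using that by simp
  qed
qed

theorem fejer_riesz:
  assumes "degree R \<le> 2 * d" "nonneg_on_circle d R"
  shows "\<exists>Q. degree Q \<le> d \<and> R = Q * cnj_reflect d Q"
  using assms
proof (induction d arbitrary: R)
  case 0
  then have "poly R 1 \<in> \<real>\<^sub>\<ge>\<^sub>0"
    unfolding nonneg_on_circle_def by (metis norm_one power_0 div_by_1)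
  then obtain r where r: "poly R 1 = of_real r" "0 \<le> r"
    by (rule nonneg_Reals_cases)
  define Q where "Q = [:complex_of_real (sqrt r):]"
  have "R = [:coeff R 0:]"
    using "0.prems"(1) degree_0_id[of R] by simp
  then have "R = [:poly R 1:]"
    by (metis poly_const_conv)
  also have "\<dots> = Q * cnj_reflect 0 Q"
  proof (rule poly_eq_on_circleI)
    fix z :: complex
    assume "cmod z = 1"
    then show "poly [:poly R 1:] z = poly (Q * cnj_reflect 0 Q) z"
      using poly_mult_cnj_reflect_circle[of Q 0 z] r by (simp add: Q_def)
  qed
  finally show ?case
    by (intro exI[of _ Q]) (simp add: Q_def)
next
  case (Suc d)
  obtain a R' where R': "R = [:-a, 1:] * cnj_reflect 1 [:-a, 1:] * R'" "degree R' \<le> 2 * d"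
    using nonneg_on_circle_obtain_factor[OF Suc.prems] by blast
  then have "nonneg_on_circle d R'"
    using nonneg_on_circle_cancel_factor Suc.prems(2) by blast
  then obtain Q' where Q': "degree Q' \<le> d" "R' = Q' * cnj_reflect d Q'"
    using Suc.IH R'(2) by blast
  define Q where "Q = [:-a, 1:] * Q'"
  have "degree Q \<le> Suc d"
    using degree_mult_le[of "[:-a, 1:]" Q'] Q'(1) by (simp add: Q_def)
  moreover have "cnj_reflect (1 + d) Q = cnj_reflect 1 [:-a, 1:] * cnj_reflect d Q'"
    unfolding Q_def by (rule cnj_reflect_mult) (simp_all add: Q'(1))
  then have "R = Q * cnj_reflect (Suc d) Q"
    unfolding R'(1) Q'(2) by (simp only: Suc_eq_plus1_left Q_def mult_ac)
  ultimately show ?case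
    by blast
qed

section \<open>Complementary polynomials\<close>

definition complementary :: "complex poly \<Rightarrow> complex poly \<Rightarrow> bool" where
  "complementary P Q \<longleftrightarrow> (\<forall>z. cmod z = 1 \<longrightarrow> (cmod (poly P z))\<^sup>2 + (cmod (poly Q z))\<^sup>2 = 1)"

lemma poly_one_minus_mult_cnj_reflect_circle:
  assumes "degree P \<le> d" "cmod z = 1"
  shows "poly (monom 1 d - P * cnj_reflect d P) z = z ^ d * of_real (1 - (cmod (poly P z))\<^sup>2)"
  unfolding poly_diff poly_monom poly_mult_cnj_reflect_circle[OF assms]
  by (simp only: of_real_diff of_real_1 right_diff_distrib mult_1_left mult_1_right)

lemma complementary_poly_exists:
  assumes deg: "degree P \<le> d" and bounded: "\<And>z. cmod z = 1 \<Longrightarrow> cmod (poly P z) \<le> 1"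
  obtains Q where "degree Q \<le> d" "complementary P Q"
proof -
  define R where "R = monom 1 d - P * cnj_reflect d P"
  have "degree (P * cnj_reflect d P) \<le> 2 * d"
    using degree_mult_le[of P "cnj_reflect d P"] deg degree_cnj_reflect[of d P] by simp
  then have "degree R \<le> 2 * d"
    unfolding R_def by (intro degree_diff_le) (simp_all add: order.trans[OF degree_monom_le])
  moreover have "nonneg_on_circle d R"
    unfolding nonneg_on_circle_def
  proof (intro allI impI)
    fix z :: complex
    assume z: "cmod z = 1"
    have "(cmod (poly P z))\<^sup>2 \<le> 1"
      using bounded[OF z] by (simp add: power_le_one)
    moreover have "z ^ d \<noteq> 0"
      using z by auto
    then have "poly R z / z ^ d = of_real (1 - (cmod (poly P z))\<^sup>2)"
      unfolding R_def poly_one_minus_mult_cnj_reflect_circle[OF deg z]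
      by (rule nonzero_mult_div_cancel_left)
    ultimately show "poly R z / z ^ d \<in> \<real>\<^sub>\<ge>\<^sub>0"
      by (simp only: nonneg_Reals_of_real_iff diff_ge_0_iff_ge)
  qed
  ultimately obtain Q where Q: "degree Q \<le> d" "R = Q * cnj_reflect d Q"
    using fejer_riesz by blast
  have "complementary P Q"
    unfolding complementary_def
  proof (intro allI impI)
    fix z :: complex
    assume z: "cmod z = 1"
    then have "z ^ d * of_real (1 - (cmod (poly P z))\<^sup>2) = z ^ d * of_real ((cmod (poly Q z))\<^sup>2)"
      using poly_one_minus_mult_cnj_reflect_circle[OF deg z] poly_mult_cnj_reflect_circle[OF Q(1) z]
      unfolding R_def[symmetric] Q(2) by simp
    then show "(cmod (poly P z))\<^sup>2 + (cmod (poly Q z))\<^sup>2 = 1"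
      using z by (simp only: mult_cancel_left of_real_eq_iff) auto
  qed
  with Q(1) show thesis
    by (rule that)
qed

lemma complementary_coeff_orthogonal:
  assumes "degree P \<le> m" "degree Q \<le> m" "0 < m" "complementary P Q"
  shows "coeff P m * cnj (coeff P 0) + coeff Q m * cnj (coeff Q 0) = 0"
proof -
  have "P * cnj_reflect m P + Q * cnj_reflect m Q = monom 1 m"
  proof (rule poly_eq_on_circleI)
    fix z :: complex
    assume z: "cmod z = 1"
    have "poly (P * cnj_reflect m P + Q * cnj_reflect m Q) z
        = z ^ m * of_real ((cmod (poly P z))\<^sup>2 + (cmod (poly Q z))\<^sup>2)"
      unfolding poly_add poly_mult_cnj_reflect_circle[OF assms(1) z]
        poly_mult_cnj_reflect_circle[OF assms(2) z] by (simp only: of_real_add distrib_left)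
    then show "poly (P * cnj_reflect m P + Q * cnj_reflect m Q) z = poly (monom 1 m) z"
      using assms(4) z unfolding complementary_def by (simp add: poly_monom)
  qed
  then have "coeff (P * cnj_reflect m P + Q * cnj_reflect m Q) 0 = 0"
    using \<open>0 < m\<close> by simp
  then have "cnj (coeff P 0 * cnj (coeff P m) + coeff Q 0 * cnj (coeff Q m)) = 0"
    by (simp add: coeff_mult_0 coeff_cnj_reflect)
  then show ?thesis
    by (simp add: mult.commute)
qed

lemma normalize_nonzero_pair:
  fixes x y :: complex
  assumes "x \<noteq> 0 \<or> y \<noteq> 0"
  obtains \<nu> where "\<nu> \<noteq> 0" "x / \<nu> * cnj (x / \<nu>) + y / \<nu> * cnj (y / \<nu>) = 1"
proof
  define s where "s = (cmod x)\<^sup>2 + (cmod y)\<^sup>2"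
  have "0 < s"
    using assms by (auto simp: s_def add_pos_nonneg add_nonneg_pos)
  show "complex_of_real (sqrt s) \<noteq> 0"
    using \<open>0 < s\<close> by simp
  have "x * cnj x + y * cnj y = of_real s"
    by (simp only: s_def of_real_add complex_norm_square)
  moreover have "complex_of_real (sqrt s) * cnj (of_real (sqrt s)) = of_real s"
    using \<open>0 < s\<close> by (simp flip: of_real_mult)
  ultimately show "x / of_real (sqrt s) * cnj (x / of_real (sqrt s))
      + y / of_real (sqrt s) * cnj (y / of_real (sqrt s)) = 1"
    using \<open>0 < s\<close> by (simp add: field_simps)
qed

lemma unit_pair_orthogonal:
  assumes "pd * cnj p0 + qd * cnj q0 = 0"
  obtains a c where "a * cnj a + c * cnj c = 1" "cnj a * p0 + cnj c * q0 = 0" "a * qd = c * pd"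
proof (cases "pd \<noteq> 0 \<or> qd \<noteq> 0")
  case True
  then obtain \<nu> where \<nu>: "\<nu> \<noteq> 0" "pd / \<nu> * cnj (pd / \<nu>) + qd / \<nu> * cnj (qd / \<nu>) = 1"
    by (rule normalize_nonzero_pair)
  have "cnj (pd / \<nu>) * p0 + cnj (qd / \<nu>) * q0 = (cnj pd * p0 + cnj qd * q0) / cnj \<nu>"
    by (simp add: add_divide_distrib)
  also have "cnj pd * p0 + cnj qd * q0 = cnj (pd * cnj p0 + qd * cnj q0)"
    by simp
  finally have "cnj (pd / \<nu>) * p0 + cnj (qd / \<nu>) * q0 = 0"
    using assms by simp
  with \<nu>(2) show thesis
    by (rule that) simp
next
  case False
  show thesis
  proof (cases "p0 \<noteq> 0 \<or> q0 \<noteq> 0")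
    case True
    then have "cnj q0 \<noteq> 0 \<or> - cnj p0 \<noteq> 0"
      by auto
    then obtain \<nu> where \<nu>: "\<nu> \<noteq> 0"
      "cnj q0 / \<nu> * cnj (cnj q0 / \<nu>) + - cnj p0 / \<nu> * cnj (- cnj p0 / \<nu>) = 1"
      by (rule normalize_nonzero_pair)
    have "cnj (cnj q0 / \<nu>) * p0 + cnj (- cnj p0 / \<nu>) * q0 = 0"
      by (simp add: field_simps)
    with \<nu>(2) show thesis
      by (rule that) (use False in simp)
  qed (use False in \<open>auto intro: that[of 1 0]\<close>)
qed

lemma complementary_rotate:
  assumes "a * cnj a + c * cnj c = 1" "complementary P Q"
  shows "complementary (smult (cnj a) P + smult (cnj c) Q) (smult (- c) P + smult a Q)"
  unfolding complementary_def
proof (intro allI impI)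
  fix z :: complex
  assume z: "cmod z = 1"
  let ?p = "poly P z" and ?q = "poly Q z"
  have "(cnj a * ?p + cnj c * ?q) * cnj (cnj a * ?p + cnj c * ?q)
      + (- c * ?p + a * ?q) * cnj (- c * ?p + a * ?q)
      = (a * cnj a + c * cnj c) * (?p * cnj ?p + ?q * cnj ?q)"
    by (simp add: algebra_simps)
  also have "\<dots> = 1"
    using assms z unfolding complementary_def
    by (simp only: mult_1_left flip: complex_norm_square of_real_add) simp
  finally show "(cmod (poly (smult (cnj a) P + smult (cnj c) Q) z))\<^sup>2
      + (cmod (poly (smult (- c) P + smult a Q) z))\<^sup>2 = 1"
    by (simp only: poly_add poly_smult flip: of_real_add complex_norm_square)
      (simp only: of_real_eq_1_iff)
qed

lemma rotation_inverse:
  assumes "a * cnj a + c * cnj c = 1"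
  shows "smult a (smult (cnj a) P + smult (cnj c) Q) - smult (cnj c) (smult (- c) P + smult a Q) = P"
    and "smult c (smult (cnj a) P + smult (cnj c) Q) + smult (cnj a) (smult (- c) P + smult a Q) = Q"
proof -
  have unit: "a * (cnj a * x) + c * (cnj c * x) = x" for x
    using assms by (simp flip: mult.assoc distrib_right)
  show "smult a (smult (cnj a) P + smult (cnj c) Q) - smult (cnj c) (smult (- c) P + smult a Q) = P"
    "smult c (smult (cnj a) P + smult (cnj c) Q) + smult (cnj a) (smult (- c) P + smult a Q) = Q"
    by (auto intro!: poly_eqI simp: algebra_simps unit)
qed

lemma complementary_pCons_0:
  "complementary (pCons 0 T) B \<Longrightarrow> complementary T B"
  unfolding complementary_def by (simp add: norm_mult)

lemma complementary_peel_layer: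
  assumes P: "degree P \<le> Suc d" and Q: "degree Q \<le> Suc d" and PQ: "complementary P Q"
  obtains a c T B where "a * cnj a + c * cnj c = 1" "degree T \<le> d" "degree B \<le> d"
    "complementary T B"
    "P = smult a (pCons 0 T) - smult (cnj c) B" "Q = smult c (pCons 0 T) + smult (cnj a) B"
proof -
  obtain a c where ac: "a * cnj a + c * cnj c = 1" "cnj a * coeff P 0 + cnj c * coeff Q 0 = 0"
      "a * coeff Q (Suc d) = c * coeff P (Suc d)"
    using unit_pair_orthogonal complementary_coeff_orthogonal[OF P Q _ PQ] by blast
  define B where "B = smult (- c) P + smult a Q"
  obtain t T where T: "smult (cnj a) P + smult (cnj c) Q = pCons t T"
    by (rule pCons_cases)
  then have "t = 0"
    using ac(2) by (metis coeff_add coeff_pCons_0 coeff_smult)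
  have "degree (pCons t T) \<le> Suc d"
    unfolding T[symmetric] using P Q
    by (intro degree_add_le order.trans[OF degree_smult_le]) simp_all
  then have "degree T \<le> d"
    by (simp add: degree_pCons_eq_if split: if_splits)
  moreover have "degree B \<le> d"
  proof (rule degree_le, intro allI impI)
    fix i
    assume "d < i"
    then have "i = Suc d \<or> (degree P < i \<and> degree Q < i)"
      using P Q by auto
    then show "coeff B i = 0"
      using ac(3) by (auto simp: B_def coeff_eq_0)
  qed
  moreover have "complementary T B"
    using complementary_rotate[OF ac(1) PQ] T \<open>t = 0\<close>
    by (simp add: B_def complementary_pCons_0)
  moreover have "P = smult a (pCons 0 T) - smult (cnj c) B"
    "Q = smult c (pCons 0 T) + smult (cnj a) B"
    using rotation_inverse[OF ac(1)] unfolding B_def T[symmetric, unfolded \<open>t = 0\<close>] by simp_all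
  ultimately show thesis
    using ac(1) that by blast
qed

section \<open>Multiplexed ancilla operations\<close>

lemma qbit_less_2: "qbit k i < 2"
  by (simp add: qbit_def)

lemma qbit_eq_bit: "qbit k i = (if bit i k then 1 else 0)"
  unfolding qbit_def bit_nat_def by (auto elim: oddE)

lemma mod_eq_iff_qbits: "(i::nat) mod 2 ^ n = j mod 2 ^ n \<longleftrightarrow> (\<forall>k<n. qbit k i = qbit k j)"
proof -
  have "i mod 2 ^ n = j mod 2 ^ n \<longleftrightarrow> take_bit n i = take_bit n j"
    by (simp add: take_bit_nat_def)
  also have "\<dots> \<longleftrightarrow> (\<forall>k<n. bit i k = bit j k)"
    by (auto simp: bit_eq_iff bit_take_bit_iff)
  also have "\<dots> \<longleftrightarrow> (\<forall>k<n. qbit k i = qbit k j)"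
    unfolding qbit_eq_bit by auto
  finally show ?thesis .
qed

lemma qbit_mod: "k < n \<Longrightarrow> qbit k (i mod 2 ^ n) = qbit k i"
  by (simp add: qbit_eq_bit bit_take_bit_iff flip: take_bit_nat_def)

lemma qbit_top: "(i::nat) < 2 ^ Suc n \<Longrightarrow> qbit n i = i div 2 ^ n"
  unfolding qbit_def by (simp add: less_mult_imp_div_less)

lemma eq_iff_qbits:
  assumes "(i::nat) < 2 ^ m" "j < 2 ^ m"
  shows "i = j \<longleftrightarrow> (\<forall>k<m. qbit k i = qbit k j)"
  using assms mod_eq_iff_qbits[of i m j] by simp

lemma nat_eq_iff_div_mod: "(i::nat) = j \<longleftrightarrow> i div m = j div m \<and> i mod m = j mod m"
  by (metis div_mult_mod_eq)

lemma qbit_pair_eq_iff: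
  assumes k: "k < n" and i: "i < 2 ^ Suc n" and j: "j < 2 ^ Suc n"
  shows "(\<forall>k'<Suc n. k' \<noteq> n \<and> k' \<noteq> k \<longrightarrow> qbit k' i = qbit k' j) \<and>
      2 * qbit n i + qbit k i = 2 * qbit n j + qbit k j \<longleftrightarrow> i = j"
    (is "?C \<and> ?r = ?s \<longleftrightarrow> _")
proof -
  have "?r = ?s \<longleftrightarrow> qbit n i = qbit n j \<and> qbit k i = qbit k j"
    using qbit_less_2[of n i] qbit_less_2[of k i] qbit_less_2[of n j] qbit_less_2[of k j]
    by presburger
  also have "?C \<and> \<dots> \<longleftrightarrow> (\<forall>k'<Suc n. qbit k' i = qbit k' j)"
  proof
    assume H: "?C \<and> qbit n i = qbit n j \<and> qbit k i = qbit k j"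
    show "\<forall>k'<Suc n. qbit k' i = qbit k' j"
    proof (intro allI impI)
      fix k'
      assume "k' < Suc n"
      then show "qbit k' i = qbit k' j"
        using H by (cases "k' = n \<or> k' = k") auto
    qed
  qed (use k in auto)
  also have "\<dots> \<longleftrightarrow> i = j"
    using eq_iff_qbits[OF i j] by simp
  finally show ?thesis .
qed

(* M is the direct sum over system states x of the 2 x 2 blocks V x acting on the ancilla, which
   is qubit n: the index i stands for system state i mod 2 ^ n and ancilla bit i div 2 ^ n. *)
definition multiplexed :: "nat \<Rightarrow> complex mat \<Rightarrow> (nat \<Rightarrow> nat \<Rightarrow> nat \<Rightarrow> complex) \<Rightarrow> bool" where
  "multiplexed n M V \<longleftrightarrow> M \<in> carrier_mat (2 ^ Suc n) (2 ^ Suc n) \<and>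
     (\<forall>i<2 ^ Suc n. \<forall>j<2 ^ Suc n. M $$ (i, j) =
        (if i mod 2 ^ n = j mod 2 ^ n then V (i mod 2 ^ n) (i div 2 ^ n) (j div 2 ^ n) else 0))"

lemma multiplexed_cong:
  "multiplexed n M V \<Longrightarrow> (\<And>x a b. x < 2 ^ n \<Longrightarrow> a < 2 \<Longrightarrow> b < 2 \<Longrightarrow> V x a b = W x a b)
    \<Longrightarrow> multiplexed n M W"
  unfolding multiplexed_def by (auto simp: less_mult_imp_div_less)

lemma multiplexed_one: "multiplexed n (1\<^sub>m (2 ^ Suc n)) (\<lambda>x a b. if a = b then 1 else 0)"
  unfolding multiplexed_def
proof (intro conjI allI impI)
  fix i j :: nat
  show "1\<^sub>m (2 ^ Suc n) $$ (i, j) = (if i mod 2 ^ n = j mod 2 ^ n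
      then (if i div 2 ^ n = j div 2 ^ n then 1 else 0) else 0)"
    if "i < 2 ^ Suc n" "j < 2 ^ Suc n"
    using that nat_eq_iff_div_mod[of i j "2 ^ n"] by auto
qed simp

lemma sum_atLeast0_lessThan_double:
  "(\<Sum>l = 0..<2 * N. f l) = (\<Sum>l = 0..<N. f l) + (\<Sum>l = 0..<N. f (l + N))"
  for N :: nat
proof -
  have "(\<Sum>l = 0..<2 * N. f l) = (\<Sum>l = 0..<N. f l) + (\<Sum>l = N..<2 * N. f l)"
    by (rule sum.atLeastLessThan_concat[symmetric]) auto
  also have "(\<Sum>l = N..<2 * N. f l) = (\<Sum>l = 0..<N. f (l + N))"
    using sum.shift_bounds_nat_ivl[of f 0 N N] by (simp add: mult_2)
  finally show ?thesis .
qed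

lemma multiplexed_mult:
  assumes A: "multiplexed n A V" and B: "multiplexed n B W"
  shows "multiplexed n (A * B) (\<lambda>x a b. V x a 0 * W x 0 b + V x a 1 * W x 1 b)"
  unfolding multiplexed_def
proof (intro conjI allI impI)
  show "A * B \<in> carrier_mat (2 ^ Suc n) (2 ^ Suc n)"
    using A B unfolding multiplexed_def by auto
next
  fix i j :: nat
  assume i: "i < 2 ^ Suc n" and j: "j < 2 ^ Suc n"
  let ?N = "2 ^ n :: nat" and ?x = "i mod 2 ^ n"
  have A_entry: "A $$ (i, l) = (if ?x = l mod ?N then V ?x (i div ?N) (l div ?N) else 0)"
    and B_entry: "B $$ (l, j) = (if l mod ?N = j mod ?N then W (l mod ?N) (l div ?N) (j div ?N) else 0)"
    if "l < 2 ^ Suc n" for l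
    using A B i j that unfolding multiplexed_def by blast+
  have "(A * B) $$ (i, j) = (\<Sum>l = 0..<2 * ?N. A $$ (i, l) * B $$ (l, j))"
    using A B i j unfolding multiplexed_def by (auto simp: scalar_prod_def)
  also have "\<dots> = (\<Sum>l = 0..<?N. A $$ (i, l) * B $$ (l, j))
      + (\<Sum>l = 0..<?N. A $$ (i, l + ?N) * B $$ (l + ?N, j))"
    by (rule sum_atLeast0_lessThan_double)
  also have "(\<Sum>l = 0..<?N. A $$ (i, l) * B $$ (l, j)) = (\<Sum>l = 0..<?N.
      if l = ?x then (if ?x = j mod ?N then V ?x (i div ?N) 0 * W ?x 0 (j div ?N) else 0) else 0)"
    by (rule sum.cong) (auto simp: A_entry B_entry)
  also have "(\<Sum>l = 0..<?N. A $$ (i, l + ?N) * B $$ (l + ?N, j)) = (\<Sum>l = 0..<?N.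
      if l = ?x then (if ?x = j mod ?N then V ?x (i div ?N) 1 * W ?x 1 (j div ?N) else 0) else 0)"
    by (rule sum.cong) (auto simp: A_entry B_entry)
  finally show "(A * B) $$ (i, j) = (if ?x = j mod ?N then
      V ?x (i div ?N) 0 * W ?x 0 (j div ?N) + V ?x (i div ?N) 1 * W ?x 1 (j div ?N) else 0)"
    by (simp add: sum.delta)
qed

lemma multiplexed_top_left_block:
  assumes "multiplexed n M V" "i < 2 ^ n" "j < 2 ^ n"
  shows "M $$ (i, j) = (if i = j then V i 0 0 else 0)"
  using assms unfolding multiplexed_def by auto

lemma gate_mat_carrier: "gate_mat m g \<in> carrier_mat (2 ^ m) (2 ^ m)"
  by (cases g) auto

lemma circuit_mat_Nil: "circuit_mat m [] = 1\<^sub>m (2 ^ m)"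
  by (simp add: circuit_mat_def)

lemma circuit_mat_snoc: "circuit_mat m (gs @ [g]) = gate_mat m g * circuit_mat m gs"
  by (simp add: circuit_mat_def)

lemma circuit_mat_single: "circuit_mat m [g] = gate_mat m g"
  using gate_mat_carrier[of m g] by (simp add: circuit_mat_def)

lemma circuit_mat_carrier: "circuit_mat m gs \<in> carrier_mat (2 ^ m) (2 ^ m)"
  by (induction gs rule: rev_induct)
    (auto simp: circuit_mat_Nil circuit_mat_snoc intro: mult_carrier_mat gate_mat_carrier)

lemma circuit_mat_append: "circuit_mat m (gs @ hs) = circuit_mat m hs * circuit_mat m gs"
proof (induction hs rule: rev_induct)
  case Nil
  show ?case
    using circuit_mat_carrier[of m gs] by (simp add: circuit_mat_Nil)
next
  case (snoc h hs)
  have "circuit_mat m (gs @ hs @ [h]) = gate_mat m h * (circuit_mat m hs * circuit_mat m gs)"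
    using snoc.IH by (simp flip: append_assoc add: circuit_mat_snoc)
  also have "\<dots> = gate_mat m h * circuit_mat m hs * circuit_mat m gs"
    by (rule assoc_mult_mat[symmetric]) (rule gate_mat_carrier circuit_mat_carrier)+
  finally show ?case
    by (simp add: circuit_mat_snoc)
qed

lemma multiplexed_ancilla_gate:
  "multiplexed n (gate_mat (Suc n) (G1 n U)) (\<lambda>x a b. U $$ (a, b))"
  unfolding multiplexed_def
proof (intro conjI allI impI)
  fix i j :: nat
  assume i: "i < 2 ^ Suc n" and j: "j < 2 ^ Suc n"
  have "(\<forall>k<Suc n. k \<noteq> n \<longrightarrow> qbit k i = qbit k j) \<longleftrightarrow> i mod 2 ^ n = j mod 2 ^ n"
    unfolding mod_eq_iff_qbits using less_Suc_eq by auto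
  then show "gate_mat (Suc n) (G1 n U) $$ (i, j) =
      (if i mod 2 ^ n = j mod 2 ^ n then U $$ (i div 2 ^ n, j div 2 ^ n) else 0)"
    using i j by (simp add: qbit_top)
qed simp

section \<open>Quantum signal processing circuits\<close>

(* On the qubit pair (ancilla, k) the gate diag(1, cis \<theta>, 1, 1) applies the phase exactly when
   the ancilla is 0 and qubit k is 1. *)
definition ctrl_phase :: "real \<Rightarrow> complex mat" where
  "ctrl_phase \<theta> = mat 4 4 (\<lambda>(r, s). if r = s then (if r = 1 then cis \<theta> else 1) else 0)"

lemma multiplexed_ctrl_phase:
  assumes k: "k < n"
  shows "multiplexed n (gate_mat (Suc n) (G2 n k (ctrl_phase \<theta>)))
    (\<lambda>x a b. if a = b then (if a = 0 \<and> qbit k x = 1 then cis \<theta> else 1) else 0)"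
  unfolding multiplexed_def
proof (intro conjI allI impI)
  fix i j :: nat
  assume i: "i < 2 ^ Suc n" and j: "j < 2 ^ Suc n"
  let ?C = "\<forall>k'<Suc n. k' \<noteq> n \<and> k' \<noteq> k \<longrightarrow> qbit k' i = qbit k' j"
  let ?r = "2 * qbit n i + qbit k i" and ?s = "2 * qbit n j + qbit k j"
  have "?r < 4" "?s < 4"
    using qbit_less_2[of n i] qbit_less_2[of k i] qbit_less_2[of n j] qbit_less_2[of k j] by auto
  have diag: "?C \<and> ?r = ?s \<longleftrightarrow> i = j"
    by (rule qbit_pair_eq_iff[OF k i j])
  have "?r = 1 \<longleftrightarrow> qbit n i = 0 \<and> qbit k i = 1"
    using qbit_less_2[of k i] by presburger
  then have phase: "?r = 1 \<longleftrightarrow> i div 2 ^ n = 0 \<and> qbit k (i mod 2 ^ n) = 1"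
    by (simp only: qbit_top[OF i] qbit_mod[OF k])
  have "gate_mat (Suc n) (G2 n k (ctrl_phase \<theta>)) $$ (i, j)
      = (if ?C \<and> ?r = ?s then (if ?r = 1 then cis \<theta> else 1) else 0)"
    using i j \<open>?r < 4\<close> \<open>?s < 4\<close> by (auto simp: ctrl_phase_def)
  also have "\<dots> = (if i mod 2 ^ n = j mod 2 ^ n then (if i div 2 ^ n = j div 2 ^ n then
      (if i div 2 ^ n = 0 \<and> qbit k (i mod 2 ^ n) = 1 then cis \<theta> else 1) else 0) else 0)"
    unfolding diag phase nat_eq_iff_div_mod[of i j "2 ^ n"] by auto
  finally show "gate_mat (Suc n) (G2 n k (ctrl_phase \<theta>)) $$ (i, j) =
      (if i mod 2 ^ n = j mod 2 ^ n then (if i div 2 ^ n = j div 2 ^ n then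
      (if i div 2 ^ n = 0 \<and> qbit k (i mod 2 ^ n) = 1 then cis \<theta> else 1) else 0) else 0)" .
qed simp

lemma unitary_ctrl_phase: "unitary_mat 4 (ctrl_phase \<theta>)"
proof -
  have "cis \<theta> * cnj (cis \<theta>) = 1" "cnj (cis \<theta>) * cis \<theta> = 1"
    by (simp_all add: cis_cnj cis_mult)
  then show ?thesis
    unfolding unitary_mat_def adjoint_mat_def
    by (auto intro!: eq_matI simp: ctrl_phase_def scalar_prod_def eval_nat_numeral
        sum.atLeast0_lessThan_Suc less_Suc_eq)
qed

(* Gate k contributes the factor root_pow n (2 ^ k) when bit k of x is set, so the whole layer
   multiplies by root_pow n x, by the binary expansion of x. *)
definition phase_layer :: "nat \<Rightarrow> nat \<Rightarrow> gate list" where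
  "phase_layer n m = map (\<lambda>k. G2 n k (ctrl_phase (2 * pi * 2 ^ k / 2 ^ n))) [0..<m]"

definition root_pow :: "nat \<Rightarrow> nat \<Rightarrow> complex" where
  "root_pow n x = cis (2 * pi * real x / 2 ^ n)"

lemma root_pow_mod_Suc:
  "root_pow n (x mod 2 ^ Suc m) =
    (if qbit m x = 1 then cis (2 * pi * 2 ^ m / 2 ^ n) else 1) * root_pow n (x mod 2 ^ m)"
proof -
  have x: "x mod 2 ^ Suc m = x mod 2 ^ m + 2 ^ m * qbit m x"
    unfolding qbit_def power_Suc2 mod_mult2_eq by simp
  have "qbit m x = 0 \<or> qbit m x = 1"
    using qbit_less_2[of m x] by auto
  then show ?thesis
    unfolding root_pow_def x by (auto simp: cis_mult add_divide_distrib algebra_simps)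
qed

lemma multiplexed_phase_layer:
  "m \<le> n \<Longrightarrow> multiplexed n (circuit_mat (Suc n) (phase_layer n m))
    (\<lambda>x a b. if a = b then (if a = 0 then root_pow n (x mod 2 ^ m) else 1) else 0)"
proof (induction m)
  case 0
  have "circuit_mat (Suc n) (phase_layer n 0) = 1\<^sub>m (2 ^ Suc n)"
    by (simp add: phase_layer_def circuit_mat_Nil)
  then show ?case
    by (simp only:) (rule multiplexed_cong[OF multiplexed_one], simp add: root_pow_def)
next
  case (Suc m)
  then have "m < n" "m \<le> n"
    by simp_all
  have "circuit_mat (Suc n) (phase_layer n (Suc m)) =
      gate_mat (Suc n) (G2 n m (ctrl_phase (2 * pi * 2 ^ m / 2 ^ n)))
      * circuit_mat (Suc n) (phase_layer n m)"
    by (simp add: phase_layer_def circuit_mat_snoc)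
  then show ?case
    by (simp only:) (rule multiplexed_cong[OF multiplexed_mult[OF
          multiplexed_ctrl_phase[OF \<open>m < n\<close>] Suc.IH[OF \<open>m \<le> n\<close>]]],
        auto simp: root_pow_mod_Suc[simplified] less_2_cases_iff)
qed

definition su2_mat :: "complex \<Rightarrow> complex \<Rightarrow> complex mat" where
  "su2_mat a c = mat 2 2 (\<lambda>(i, j). if i = 0 then (if j = 0 then a else - cnj c) else (if j = 0 then c else cnj a))"

lemma unitary_su2_mat:
  assumes "a * cnj a + c * cnj c = 1"
  shows "unitary_mat 2 (su2_mat a c)"
proof -
  have "cnj a * a + cnj c * c = 1" "c * cnj c + a * cnj a = 1" "cnj c * c + cnj a * a = 1"
    using assms by (simp_all add: algebra_simps)
  then show ?thesis
    using assms unfolding unitary_mat_def adjoint_mat_def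
    by (auto intro!: eq_matI simp: su2_mat_def scalar_prod_def eval_nat_numeral
        sum.atLeast0_lessThan_Suc less_Suc_eq algebra_simps)
qed

definition implements_pair :: "nat \<Rightarrow> gate list \<Rightarrow> complex poly \<Rightarrow> complex poly \<Rightarrow> bool" where
  "implements_pair n gs P Q \<longleftrightarrow> (\<exists>V. multiplexed n (circuit_mat (Suc n) gs) V \<and>
     (\<forall>x<2 ^ n. V x 0 0 = poly P (root_pow n x) \<and> V x 1 0 = poly Q (root_pow n x)))"

lemma implements_pair_constant: "implements_pair n [G1 n (su2_mat p q)] [:p:] [:q:]"
  unfolding implements_pair_def circuit_mat_single
  by (intro exI[of _ "\<lambda>x a b. su2_mat p q $$ (a, b)"] conjI multiplexed_ancilla_gate)
    (simp add: su2_mat_def)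

lemma implements_pair_layer:
  assumes "implements_pair n gs T B"
  shows "implements_pair n (gs @ phase_layer n n @ [G1 n (su2_mat a c)])
    (smult a (pCons 0 T) - smult (cnj c) B) (smult c (pCons 0 T) + smult (cnj a) B)"
proof -
  obtain V where V: "multiplexed n (circuit_mat (Suc n) gs) V"
      "\<forall>x<2 ^ n. V x 0 0 = poly T (root_pow n x) \<and> V x 1 0 = poly B (root_pow n x)"
    using assms unfolding implements_pair_def by blast
  have "circuit_mat (Suc n) (gs @ phase_layer n n @ [G1 n (su2_mat a c)])
      = gate_mat (Suc n) (G1 n (su2_mat a c)) * circuit_mat (Suc n) (phase_layer n n)
        * circuit_mat (Suc n) gs"
    by (simp add: circuit_mat_append circuit_mat_single)
  then have "multiplexed n (circuit_mat (Suc n) (gs @ phase_layer n n @ [G1 n (su2_mat a c)]))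
      (\<lambda>x a' b. su2_mat a c $$ (a', 0) * (root_pow n x * V x 0 b) + su2_mat a c $$ (a', 1) * V x 1 b)"
    by (simp only:) (rule multiplexed_cong[OF multiplexed_mult[OF multiplexed_mult[OF
          multiplexed_ancilla_gate multiplexed_phase_layer[OF order_refl]] V(1)]], simp add: mult_ac)
  then show ?thesis
    unfolding implements_pair_def using V(2) by (auto simp: su2_mat_def mult_ac)
qed

lemma implements_pair_top_left_block:
  assumes "implements_pair n gs P Q" "i < 2 ^ n" "j < 2 ^ n"
  shows "circuit_mat (Suc n) gs $$ (i, j) = (if i = j then poly P (root_pow n i) else 0)"
  using assms multiplexed_top_left_block unfolding implements_pair_def by fastforce

lemma valid_phase_layer: "g \<in> set (phase_layer n n) \<Longrightarrow> valid_gate (Suc n) g"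
  by (auto simp: phase_layer_def unitary_ctrl_phase)

theorem qsp_circuit:
  assumes "degree P \<le> d" "degree Q \<le> d" "complementary P Q"
  shows "\<exists>gs. (\<forall>g\<in>set gs. valid_gate (Suc n) g) \<and> length gs = Suc d + d * n \<and>
    implements_pair n gs P Q"
  using assms
proof (induction d arbitrary: P Q)
  case 0
  then have P: "P = [:coeff P 0:]" and Q: "Q = [:coeff Q 0:]"
    using degree_0_id by (metis le_zero_eq)+
  let ?p = "coeff P 0" and ?q = "coeff Q 0"
  have "(cmod ?p)\<^sup>2 + (cmod ?q)\<^sup>2 = 1"
    using "0.prems"(3) unfolding complementary_def by (metis norm_one P Q poly_const_conv)
  then have "complex_of_real ((cmod ?p)\<^sup>2 + (cmod ?q)\<^sup>2) = 1"
    by (metis of_real_1)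
  then have "?p * cnj ?p + ?q * cnj ?q = 1"
    by (simp only: of_real_add complex_norm_square)
  then show ?case
    using implements_pair_constant[of n ?p ?q] P Q
    by (intro exI[of _ "[G1 n (su2_mat ?p ?q)]"]) (simp add: unitary_su2_mat)
next
  case (Suc d)
  obtain a c T B where ac: "a * cnj a + c * cnj c = 1" and TB: "degree T \<le> d" "degree B \<le> d"
      "complementary T B" and
    P: "P = smult a (pCons 0 T) - smult (cnj c) B" and Q: "Q = smult c (pCons 0 T) + smult (cnj a) B"
    using complementary_peel_layer[OF Suc.prems] by metis
  obtain gs where gs: "\<forall>g\<in>set gs. valid_gate (Suc n) g" "length gs = Suc d + d * n"
      "implements_pair n gs T B"
    using Suc.IH[OF TB] by blast
  show ?case
    using gs unitary_su2_mat[OF ac] valid_phase_layer implements_pair_layer[OF gs(3)]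
    by (intro exI[of _ "gs @ phase_layer n n @ [G1 n (su2_mat a c)]"]) (auto simp: P Q phase_layer_def)
qed

lemma trig_poly_eq_poly:
  "trig_poly n d \<alpha> x = poly (\<Sum>k\<le>d. monom (\<alpha> k) k) (cis (2 * pi * x / 2 ^ n))"
  unfolding trig_poly_def poly_sum poly_monom DeMoivre
  by (intro sum.cong refl) (simp add: cis_conv_exp field_simps)

lemma unit_circle_eq_cis_scaled:
  assumes "cmod z = 1"
  obtains x where "z = cis (2 * pi * x / 2 ^ n)"
proof
  have "z \<noteq> 0"
    using assms by auto
  then have "z = cis (Arg z)"
    using assms by (simp add: cis_Arg sgn_div_norm)
  then show "z = cis (2 * pi * (Arg z * 2 ^ n / (2 * pi)) / 2 ^ n)"
    by simp
qed

theorem trig_poly_circuit: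
  assumes bounded: "\<forall>x::real. (cmod (trig_poly n d \<alpha> x))\<^sup>2 \<le> 1"
  shows "\<exists>gs. (\<forall>g\<in>set gs. valid_gate (Suc n) g) \<and> length gs = Suc d + d * n \<and>
    (\<forall>i<2 ^ n. \<forall>j<2 ^ n. circuit_mat (Suc n) gs $$ (i, j) =
      (if i = j then trig_poly n d \<alpha> (real i) else 0))"
proof -
  define P where "P = (\<Sum>k\<le>d. monom (\<alpha> k) k)"
  have "degree P \<le> d"
    unfolding P_def by (intro degree_sum_le) (auto intro: order.trans[OF degree_monom_le])
  moreover have "cmod (poly P z) \<le> 1" if z: "cmod z = 1" for z
  proof -
    obtain x where "z = cis (2 * pi * x / 2 ^ n)"
      using unit_circle_eq_cis_scaled[OF z] .
    then have "(cmod (poly P z))\<^sup>2 \<le> 1"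
      using bounded by (simp add: P_def trig_poly_eq_poly)
    then show ?thesis
      by (simp add: abs_square_le_1)
  qed
  ultimately obtain Q where "degree Q \<le> d" "complementary P Q"
    using complementary_poly_exists by metis
  then obtain gs where "\<forall>g\<in>set gs. valid_gate (Suc n) g" "length gs = Suc d + d * n"
      "implements_pair n gs P Q"
    using qsp_circuit[OF \<open>degree P \<le> d\<close>] by blast
  then show ?thesis
    using implements_pair_top_left_block
    by (intro exI[of _ gs]) (simp add: P_def root_pow_def trig_poly_eq_poly)
qed

lemma gate_count_le:
  assumes "1 \<le> n" "1 \<le> d"
  shows "real (Suc d + d * n) \<le> 3 * real d * real n"
proof -
  have "real d \<le> real d * real n" "1 \<le> real d * real n"
    using assms mult_mono[of 1 "real d" 1 "real n"] by simp_all
  then show ?thesis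
    by simp
qed

theorem corollary3:
  "\<exists>C::real. \<forall>(n::nat) (d::nat) (\<alpha>::nat \<Rightarrow> complex).
     n \<ge> 1 \<longrightarrow> d \<ge> 1 \<longrightarrow>
     (\<forall>x::real. (cmod (trig_poly n d \<alpha> x))\<^sup>2 \<le> 1) \<longrightarrow>
     (\<exists>gs::gate list.
        (\<forall>g\<in>set gs. valid_gate (n + 1) g) \<and>
        real (length gs) \<le> C * real d * real n \<and>
        (\<forall>i<2 ^ n. \<forall>j<2 ^ n.
           circuit_mat (n + 1) gs $$ (i, j) =
             (if i = j then trig_poly n d \<alpha> (real i) else 0)))"
proof (intro exI[of _ 3] allI impI)
  fix n d :: nat and \<alpha> :: "nat \<Rightarrow> complex"
  assume "n \<ge> 1" "d \<ge> 1" "\<forall>x::real. (cmod (trig_poly n d \<alpha> x))\<^sup>2 \<le> 1"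
  then obtain gs where "\<forall>g\<in>set gs. valid_gate (Suc n) g" "length gs = Suc d + d * n"
      "\<forall>i<2 ^ n. \<forall>j<2 ^ n. circuit_mat (Suc n) gs $$ (i, j) =
        (if i = j then trig_poly n d \<alpha> (real i) else 0)"
    using trig_poly_circuit by blast
  moreover have "real (Suc d + d * n) \<le> 3 * real d * real n"
    using gate_count_le \<open>n \<ge> 1\<close> \<open>d \<ge> 1\<close> .
  ultimately show "\<exists>gs. (\<forall>g\<in>set gs. valid_gate (n + 1) g) \<and> real (length gs) \<le> 3 * real d * real n \<and>
      (\<forall>i<2 ^ n. \<forall>j<2 ^ n. circuit_mat (n + 1) gs $$ (i, j) =
        (if i = j then trig_poly n d \<alpha> (real i) else 0))"
    by (intro exI[of _ gs]) simp
qed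

end
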